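(* Let $N,Q$ be positive integers, $C=[-1,1)^{2N-1}$, $C_+=[0,1)^{2N-1}$ and $F(x)=(1+\|x\|^2)^{-N}$. For every continuous nonnegative function $\Theta:[-1,1]^{2N-1}\times[0,1]^{2N-1}\to\mathbb{R}$, $$\int_C\Theta(A_Q(x),B_Q(x))F(x)\,\mathrm{d}x\le\exp\!\Big(\frac{2N^{3/2}}{Q}\Big)\int_{C_+}\int_C\Theta(A_Q(x),y)F(x)\,\mathrm{d}x\,\mathrm{d}y.$$
   Context: For $a\in\mathbb{R}$, $A(a)$ is the integral part of $a$ and $A_Q(a)=Q^{-1}A(Qa)$. For $x\in\mathbb{R}^{2N-1}$, $A_Q(x)=(A_Q(x_1),\dots,A_Q(x_{2N-1}))$ and $B_Q(x)=(x-A_Q(x))Q\in[0,1]^{2N-1}$. $\|\cdot\|$ is the Euclidean norm and integrals are with respect to Lebesgue measure. *)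

theory Defs
  imports "HOL-Analysis.Analysis"
begin

definition AQ :: "nat \<Rightarrow> real \<Rightarrow> real" where
  "AQ Q a = real_of_int \<lfloor>real Q * a\<rfloor> / real Q"

definition AQv :: "nat \<Rightarrow> real^'n \<Rightarrow> real^'n" where
  "AQv Q x = (\<chi> i. AQ Q (x $ i))"

definition BQv :: "nat \<Rightarrow> real^'n \<Rightarrow> real^'n" where
  "BQv Q x = real Q *\<^sub>R (x - AQv Q x)"

definition hcube :: "real \<Rightarrow> real \<Rightarrow> (real^'n) set" where
  "hcube a b = {x. \<forall>i. a \<le> x $ i \<and> x $ i < b}"

definition FN :: "nat \<Rightarrow> real^'n \<Rightarrow> real" where
  "FN N x = (1 + (norm x)\<^sup>2) powr (- real N)"

end

theory Submission
  imports Defs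
begin

text \<open>
  Split the cube into the grid cells \<open>[k/Q, (k+1)/Q)\<close>, on which \<open>A\<^sub>Q\<close> is constant and \<open>B\<^sub>Q\<close> is
  the affine bijection \<open>x \<mapsto> Q(x - k/Q)\<close> onto the unit cube. A cell then contributes
  \<open>\<integral>\<Theta>(k/Q, Q(x - k/Q)) F(x) dx\<close> to the left-hand side and \<open>(\<integral>\<Theta>(k/Q, y) dy) (\<integral>\<^sub>c\<^sub>e\<^sub>l\<^sub>l F)\<close> to the
  right-hand side. Since \<open>|\<nabla> log F| \<le> N\<close>, both are within a factor \<open>exp(N \<cdot> diam/2)\<close> of the same
  expression with \<open>F\<close> frozen at the centre of the cell, and \<open>N \<cdot> diam = N\<surd>(2N - 1)/Q \<le> 2N^(3/2)/Q\<close>.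
\<close>

lemma continuous_on_FN: "continuous_on S (FN N)"
  unfolding FN_def by (intro continuous_intros) (smt (verit) zero_le_power2)

lemma FN_pos: "FN N x > 0"
  unfolding FN_def by (smt (verit) powr_gt_zero zero_le_power2)

lemma ln_one_plus_square_diff_le:
  fixes s t :: real
  assumes "t \<le> s"
  shows "ln (1 + s\<^sup>2) - ln (1 + t\<^sup>2) \<le> s - t"
proof -
  have "ln (1 + s\<^sup>2) - s \<le> ln (1 + t\<^sup>2) - t"
  proof (rule DERIV_nonpos_imp_nonincreasing[OF assms])
    fix x :: real
    have pos: "1 + x\<^sup>2 > 0" by (simp add: add_pos_nonneg)
    have "((\<lambda>u. ln (1 + u\<^sup>2) - u) has_real_derivative (2 * x / (1 + x\<^sup>2) - 1)) (at x)"
      using pos by (auto intro!: derivative_eq_intros simp: power2_eq_square)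
    moreover have "2 * x \<le> 1 + x\<^sup>2"
      using zero_le_power2[of "x - 1"] by (simp add: power2_diff)
    then have "2 * x / (1 + x\<^sup>2) - 1 \<le> 0"
      using pos by (simp add: divide_le_eq)
    ultimately show "\<exists>y. ((\<lambda>u. ln (1 + u\<^sup>2) - u) has_real_derivative y) (at x) \<and> y \<le> 0"
      by blast
  qed
  then show ?thesis by simp
qed

lemma FN_le_exp_dist: "FN N x \<le> exp (real N * dist x z) * FN N z"
proof -
  have pos: "1 + (norm y)\<^sup>2 > 0" for y :: "real^'n" by (simp add: add_pos_nonneg)
  have log_diff: "ln (1 + (norm z)\<^sup>2) - ln (1 + (norm x)\<^sup>2) \<le> dist x z"
  proof (cases "norm z \<le> norm x")
    case True
    then have "(norm z)\<^sup>2 \<le> (norm x)\<^sup>2" by (simp add: power_mono)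
    then have "ln (1 + (norm z)\<^sup>2) \<le> ln (1 + (norm x)\<^sup>2)"
      using pos by (subst ln_le_cancel_iff) auto
    then show ?thesis using zero_le_dist[of x z] by linarith
  next
    case False
    then have "ln (1 + (norm z)\<^sup>2) - ln (1 + (norm x)\<^sup>2) \<le> norm z - norm x"
      by (intro ln_one_plus_square_diff_le) simp
    also have "\<dots> \<le> dist x z"
      by (metis dist_commute dist_norm norm_triangle_ineq2)
    finally show ?thesis .
  qed
  have "FN N x = exp (- real N * ln (1 + (norm x)\<^sup>2))"
    unfolding FN_def powr_def using pos[of x] by simp
  also have "\<dots> \<le> exp (real N * dist x z + (- real N * ln (1 + (norm z)\<^sup>2)))"
    using mult_left_mono[OF log_diff, of "real N"] by (simp add: algebra_simps)
  also have "\<dots> = exp (real N * dist x z) * FN N z"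
    unfolding FN_def powr_def exp_add using pos[of z] by simp
  finally show ?thesis .
qed

lemma dist_midpoint_le_cbox:
  fixes a b x :: "'a::euclidean_space"
  assumes "x \<in> cbox a b"
  shows "2 * dist x (midpoint a b) \<le> dist a b"
proof -
  have "norm (2 *\<^sub>R x - a - b) \<le> norm (b - a)"
  proof (rule norm_le_componentwise)
    fix i :: 'a assume "i \<in> Basis"
    then have "a \<bullet> i \<le> x \<bullet> i" "x \<bullet> i \<le> b \<bullet> i" using assms by (auto simp: mem_box)
    then show "\<bar>(2 *\<^sub>R x - a - b) \<bullet> i\<bar> \<le> \<bar>(b - a) \<bullet> i\<bar>"
      by (simp add: inner_diff_left)
  qed
  moreover have "2 *\<^sub>R x - a - b = 2 *\<^sub>R (x - midpoint a b)"
    by (simp add: midpoint_def algebra_simps)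
  ultimately show ?thesis by (simp add: dist_norm norm_minus_commute)
qed

lemma has_integral_between_box_cbox:
  fixes f :: "'a::euclidean_space \<Rightarrow> real"
  assumes "box a b \<subseteq> S" "S \<subseteq> cbox a b"
  shows "(f has_integral i) S \<longleftrightarrow> (f has_integral i) (cbox a b)"
proof (rule has_integral_spike_set_eq)
  show "negligible {x \<in> S - cbox a b. f x \<noteq> 0}"
    by (rule negligible_subset[OF negligible_empty]) (use assms(2) in blast)
  show "negligible {x \<in> cbox a b - S. f x \<noteq> 0}"
    by (rule negligible_subset[OF negligible_frontier_interval]) (use assms(1) in blast)
qed

definition cell_lo :: "nat \<Rightarrow> ('n \<Rightarrow> int) \<Rightarrow> real^'n" where
  "cell_lo Q k = (\<chi> i. real_of_int (k i) / real Q)"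

definition cell_hi :: "nat \<Rightarrow> ('n \<Rightarrow> int) \<Rightarrow> real^'n" where
  "cell_hi Q k = (\<chi> i. (real_of_int (k i) + 1) / real Q)"

definition cell :: "nat \<Rightarrow> ('n \<Rightarrow> int) \<Rightarrow> (real^'n) set" where
  "cell Q k = {x. \<forall>i. \<lfloor>real Q * x $ i\<rfloor> = k i}"

definition cell_indices :: "nat \<Rightarrow> ('n \<Rightarrow> int) set" where
  "cell_indices Q = PiE UNIV (\<lambda>_. {- int Q..<int Q})"

lemma finite_cell_indices: "finite (cell_indices Q :: ('n::finite \<Rightarrow> int) set)"
  unfolding cell_indices_def by (intro finite_PiE) auto

lemma mem_cell_iff:
  assumes "Q > 0"
  shows "x \<in> cell Q k \<longleftrightarrow> (\<forall>i. cell_lo Q k $ i \<le> x $ i \<and> x $ i < cell_hi Q k $ i)"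
  using assms unfolding cell_def cell_lo_def cell_hi_def floor_eq_iff
  by (simp add: divide_le_eq less_divide_eq mult.commute)

lemma box_subset_cell: "Q > 0 \<Longrightarrow> box (cell_lo Q k) (cell_hi Q k) \<subseteq> cell Q k"
  by (auto simp: mem_cell_iff mem_box_cart less_imp_le)

lemma cell_subset_cbox: "Q > 0 \<Longrightarrow> cell Q k \<subseteq> cbox (cell_lo Q k) (cell_hi Q k)"
  by (auto simp: mem_cell_iff mem_box_cart less_imp_le)

lemma mem_cell_iff_floor: "x \<in> cell Q k \<longleftrightarrow> k = (\<lambda>i. \<lfloor>real Q * x $ i\<rfloor>)"
  unfolding cell_def by auto

lemma AQv_cell: "x \<in> cell Q k \<Longrightarrow> AQv Q x = cell_lo Q k"
  unfolding cell_def AQv_def AQ_def cell_lo_def by (simp add: vec_eq_iff)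

lemma hcube_eq_Union_cells:
  assumes "Q > 0"
  shows "hcube (-1) 1 = (\<Union>k\<in>cell_indices Q. cell Q k)"
proof -
  have "- 1 \<le> t \<and> t < 1 \<longleftrightarrow> \<lfloor>real Q * t\<rfloor> \<in> {- int Q..<int Q}" for t :: real
  proof -
    have "- 1 \<le> t \<longleftrightarrow> - real Q \<le> real Q * t" "t < 1 \<longleftrightarrow> real Q * t < real Q"
      using assms by (simp_all add: mult_le_cancel_left_pos[of "real Q" "-1", simplified])
    then show ?thesis by (simp add: le_floor_iff floor_less_iff)
  qed
  then show ?thesis
    unfolding hcube_def cell_indices_def by (auto simp: mem_cell_iff_floor PiE_iff)
qed

lemma cell_lo_in_cube:
  assumes "Q > 0" "k \<in> cell_indices Q"
  shows "cell_lo Q k \<in> cbox (-1) 1"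
proof -
  have "- int Q \<le> k i \<and> k i \<le> int Q" for i
    using assms(2) by (auto simp: cell_indices_def PiE_iff less_imp_le)
  then have "real_of_int (- int Q) \<le> real_of_int (k i) \<and> real_of_int (k i) \<le> real_of_int (int Q)" for i
    by (simp only: of_int_le_iff)
  then have "- real Q \<le> real_of_int (k i) \<and> real_of_int (k i) \<le> real Q" for i
    by simp
  then show ?thesis
    unfolding mem_box_cart cell_lo_def using assms(1) by (auto simp: divide_le_eq le_divide_eq)
qed

lemma rescaled_cell_in_unit_cube:
  "Q > 0 \<Longrightarrow> x \<in> cbox (cell_lo Q k) (cell_hi Q k) \<Longrightarrow> real Q *\<^sub>R (x - cell_lo Q k) \<in> cbox 0 1"
  unfolding mem_box_cart cell_lo_def cell_hi_def
  by (auto simp: divide_le_eq le_divide_eq algebra_simps)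

lemma content_cell:
  fixes k :: "'n::finite \<Rightarrow> int"
  assumes "Q > 0"
  shows "measure lborel (cbox (cell_lo Q k) (cell_hi Q k)) = (1 / real Q) ^ CARD('n)"
proof -
  have "cell_lo Q k \<in> cbox (cell_lo Q k) (cell_hi Q k)"
    unfolding mem_box_cart cell_lo_def cell_hi_def using assms by (simp add: divide_right_mono)
  then have "cbox (cell_lo Q k) (cell_hi Q k) \<noteq> {}" by blast
  moreover have "cell_hi Q k $ i - cell_lo Q k $ i = 1 / real Q" for i
    by (simp add: cell_lo_def cell_hi_def diff_divide_distrib[symmetric])
  ultimately show ?thesis by (simp add: content_cbox_cart)
qed

lemma dist_cell_lo_hi:
  fixes k :: "'n::finite \<Rightarrow> int"
  shows "dist (cell_lo Q k) (cell_hi Q k) = sqrt (real CARD('n)) / real Q"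
proof -
  have "cell_lo Q k $ i - cell_hi Q k $ i = - (1 / real Q)" for i
    by (simp add: cell_lo_def cell_hi_def diff_divide_distrib[symmetric])
  then show ?thesis by (simp add: dist_norm norm_vec_def L2_set_constant)
qed

lemma continuous_on_rescaled_cell:
  assumes "Q > 0" "continuous_on (cbox 0 1) h"
  shows "continuous_on (cbox (cell_lo Q k) (cell_hi Q k)) (\<lambda>x. h (real Q *\<^sub>R (x - cell_lo Q k)))"
  by (rule continuous_on_compose2[OF assms(2)])
    (auto intro!: continuous_intros rescaled_cell_in_unit_cube[OF assms(1)])

lemma integral_rescaled_cell:
  fixes h :: "real^'n \<Rightarrow> real"
  assumes Q: "Q > 0" and h: "h integrable_on cbox 0 1"
  shows "integral (cbox (cell_lo Q k) (cell_hi Q k)) (\<lambda>x. h (real Q *\<^sub>R (x - cell_lo Q k)))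
     = integral (cbox 0 1) h / real Q ^ CARD('n)"
proof -
  let ?a = "cell_lo Q k" and ?b = "cell_hi Q k"
  have Qpos: "real Q > 0" using Q by simp
  have "((\<lambda>x. h (real Q *\<^sub>R x + - real Q *\<^sub>R ?a)) has_integral
      integral (cbox 0 1) h /\<^sub>R real Q ^ DIM(real^'n))
      (cbox ((0 - - real Q *\<^sub>R ?a) /\<^sub>R real Q) ((1 - - real Q *\<^sub>R ?a) /\<^sub>R real Q))"
    using h Qpos by (intro has_integral_affinity') auto
  moreover have "(0 - - real Q *\<^sub>R ?a) /\<^sub>R real Q = ?a" "(1 - - real Q *\<^sub>R ?a) /\<^sub>R real Q = ?b"
    using Qpos by (simp_all add: vec_eq_iff cell_lo_def cell_hi_def field_simps)
  ultimately have "((\<lambda>x. h (real Q *\<^sub>R (x - ?a))) has_integral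
      integral (cbox 0 1) h /\<^sub>R real Q ^ CARD('n)) (cbox ?a ?b)"
    by (simp add: algebra_simps)
  then show ?thesis by (simp add: integral_unique divide_inverse_commute)
qed

lemma has_integral_hcube_by_cells:
  fixes f :: "real^'n \<Rightarrow> real"
  assumes Q: "Q > 0"
    and int: "\<And>k. k \<in> cell_indices Q \<Longrightarrow> (g k has_integral i k) (cbox (cell_lo Q k) (cell_hi Q k))"
    and eq: "\<And>k x. k \<in> cell_indices Q \<Longrightarrow> x \<in> cell Q k \<Longrightarrow> f x = g k x"
  shows "(f has_integral (\<Sum>k\<in>cell_indices Q. i k)) (hcube (-1) 1)"
  unfolding hcube_eq_Union_cells[OF Q]
proof (rule has_integral_UN[OF finite_cell_indices])
  fix k :: "'n \<Rightarrow> int" assume k: "k \<in> cell_indices Q"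
  have "(g k has_integral i k) (cell Q k)"
    using int[OF k] has_integral_between_box_cbox[OF box_subset_cell[OF Q] cell_subset_cbox[OF Q]]
    by blast
  then show "(f has_integral i k) (cell Q k)"
    by (rule has_integral_eq[rotated]) (simp add: eq[OF k])
next
  have disjoint: "cell Q k \<inter> cell Q k' = {}" if "k \<noteq> k'" for k k' :: "'n \<Rightarrow> int"
    using that by (auto simp: mem_cell_iff_floor)
  then show "pairwise (\<lambda>k k'. negligible (cell Q k \<inter> cell Q k'))
      (cell_indices Q :: ('n \<Rightarrow> int) set)"
    unfolding pairwise_def by (simp add: disjoint)
qed

lemma integral_rescaled_cell_mult_le:
  fixes h F :: "real^'n \<Rightarrow> real" and L :: real
  assumes Q: "Q > 0" and "L \<ge> 0"
    and h_cont: "continuous_on (cbox 0 1) h" and h_nonneg: "\<And>y. y \<in> cbox 0 1 \<Longrightarrow> h y \<ge> 0"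
    and F_cont: "continuous_on UNIV F" and F_pos: "\<And>x. F x > 0"
    and F_log_lipschitz: "\<And>x z. F x \<le> exp (L * dist x z) * F z"
  shows "integral (cbox (cell_lo Q k) (cell_hi Q k)) (\<lambda>x. h (real Q *\<^sub>R (x - cell_lo Q k)) * F x)
    \<le> exp (L * sqrt (real CARD('n)) / real Q) *
       (integral (cbox 0 1) h * integral (cbox (cell_lo Q k) (cell_hi Q k)) F)"
proof -
  let ?a = "cell_lo Q k" and ?b = "cell_hi Q k"
  let ?c = "midpoint ?a ?b" and ?g = "\<lambda>x. h (real Q *\<^sub>R (x - cell_lo Q k))"
  define E where "E = exp (L * sqrt (real CARD('n)) / (2 * real Q))"
  have E_pos: "E > 0" unfolding E_def by simp
  have F_near_centre: "F x \<le> E * F z" if "x \<in> cbox ?a ?b \<and> z = ?c \<or> z \<in> cbox ?a ?b \<and> x = ?c" for x z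
  proof -
    have "2 * dist x z \<le> dist ?a ?b"
      using that dist_midpoint_le_cbox by (metis dist_commute)
    then have "L * dist x z \<le> L * (sqrt (real CARD('n)) / (2 * real Q))"
      unfolding dist_cell_lo_hi using \<open>L \<ge> 0\<close> by (intro mult_left_mono) simp_all
    then have "exp (L * dist x z) \<le> E"
      unfolding E_def by simp
    then show ?thesis
      using F_log_lipschitz[of x z] F_pos[of z] by (meson mult_right_mono less_imp_le order_trans)
  qed
  have g_cont: "continuous_on (cbox ?a ?b) ?g"
    by (rule continuous_on_rescaled_cell[OF Q h_cont])
  have "integral (cbox ?a ?b) (\<lambda>x. ?g x * F x) \<le> integral (cbox ?a ?b) (\<lambda>x. ?g x * (E * F ?c))"
    using h_nonneg rescaled_cell_in_unit_cube[OF Q] F_near_centre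
    by (intro integral_le integrable_continuous continuous_intros g_cont
        continuous_on_subset[OF F_cont] mult_left_mono) auto
  also have "\<dots> = E * F ?c * integral (cbox 0 1) h / real Q ^ CARD('n)"
    using integral_rescaled_cell[OF Q integrable_continuous[OF h_cont]] by simp
  also have "\<dots> = E * E * (integral (cbox 0 1) h * ((1 / real Q) ^ CARD('n) * (F ?c / E)))"
    using E_pos by (simp add: field_simps power_divide)
  also have "\<dots> \<le> E * E * (integral (cbox 0 1) h * integral (cbox ?a ?b) F)"
  proof -
    have "integral (cbox ?a ?b) (\<lambda>x. F ?c / E) \<le> integral (cbox ?a ?b) F"
      using F_near_centre E_pos
      by (intro integral_le integrable_continuous continuous_on_subset[OF F_cont])
        (auto simp: divide_le_eq mult.commute)
    then have "(1 / real Q) ^ CARD('n) * (F ?c / E) \<le> integral (cbox ?a ?b) F"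
      by (simp add: content_cell[OF Q])
    moreover have "integral (cbox 0 1) h \<ge> 0"
      using h_nonneg by (intro integral_nonneg integrable_continuous h_cont) auto
    ultimately show ?thesis
      using E_pos by (intro mult_left_mono) auto
  qed
  also have "E * E = exp (L * sqrt (real CARD('n)) / real Q)"
    unfolding E_def exp_add[symmetric] by (simp add: field_simps)
  finally show ?thesis .
qed

lemma has_integral_hcube_unit_iff:
  fixes f :: "real^'n \<Rightarrow> real"
  shows "(f has_integral i) (hcube 0 1) \<longleftrightarrow> (f has_integral i) (cbox 0 1)"
  by (rule has_integral_between_box_cbox) (auto simp: hcube_def mem_box_cart less_imp_le)

lemma integral_hcube_AQv_BQv_eq_sum_cells:
  fixes \<Theta> :: "(real^'n) \<times> (real^'n) \<Rightarrow> real" and F :: "real^'n \<Rightarrow> real"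
  assumes Q: "Q > 0" and \<Theta>_cont: "continuous_on (cbox (- 1) 1 \<times> cbox 0 1) \<Theta>"
    and F_cont: "continuous_on UNIV F"
  shows "integral (hcube (-1) 1) (\<lambda>x. \<Theta> (AQv Q x, BQv Q x) * F x)
    = (\<Sum>k\<in>cell_indices Q. integral (cbox (cell_lo Q k) (cell_hi Q k))
        (\<lambda>x. \<Theta> (cell_lo Q k, real Q *\<^sub>R (x - cell_lo Q k)) * F x))"
proof (rule integral_unique, rule has_integral_hcube_by_cells[OF Q])
  fix k :: "'n \<Rightarrow> int" assume k: "k \<in> cell_indices Q"
  have "continuous_on (cbox 0 1) (\<lambda>y. \<Theta> (cell_lo Q k, y))"
    by (rule continuous_on_compose2[OF \<Theta>_cont])
      (auto intro!: continuous_intros cell_lo_in_cube[OF Q k])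
  then show "((\<lambda>x. \<Theta> (cell_lo Q k, real Q *\<^sub>R (x - cell_lo Q k)) * F x) has_integral
      integral (cbox (cell_lo Q k) (cell_hi Q k)) (\<lambda>x. \<Theta> (cell_lo Q k, real Q *\<^sub>R (x - cell_lo Q k)) * F x))
      (cbox (cell_lo Q k) (cell_hi Q k))"
    by (intro integrable_integral integrable_continuous continuous_on_mult
        continuous_on_rescaled_cell[OF Q] continuous_on_subset[OF F_cont]) auto
qed (simp add: AQv_cell BQv_def)

lemma integral_hcube_AQv_eq_sum_cells:
  fixes \<Theta> :: "(real^'n) \<times> (real^'n) \<Rightarrow> real" and F :: "real^'n \<Rightarrow> real"
  assumes Q: "Q > 0" and F_cont: "continuous_on UNIV F"
  shows "integral (hcube (-1) 1) (\<lambda>x. \<Theta> (AQv Q x, y) * F x)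
    = (\<Sum>k\<in>cell_indices Q. \<Theta> (cell_lo Q k, y) * integral (cbox (cell_lo Q k) (cell_hi Q k)) F)"
proof (rule integral_unique, rule has_integral_hcube_by_cells[OF Q])
  fix k :: "'n \<Rightarrow> int"
  show "((\<lambda>x. \<Theta> (cell_lo Q k, y) * F x) has_integral
      \<Theta> (cell_lo Q k, y) * integral (cbox (cell_lo Q k) (cell_hi Q k)) F) (cbox (cell_lo Q k) (cell_hi Q k))"
    by (intro has_integral_mult_right integrable_integral integrable_continuous
        continuous_on_subset[OF F_cont]) auto
qed (simp add: AQv_cell)

lemma N_mult_sqrt_le_powr:
  assumes "n \<le> 4 * N"
  shows "real N * sqrt (real n) \<le> 2 * real N powr (3/2)"
proof -
  have "sqrt (real n) \<le> 2 * sqrt (real N)"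
    using assms real_sqrt_le_mono[of n "4 * N"] by (simp add: real_sqrt_mult)
  then have "real N * sqrt (real n) \<le> real N * (2 * sqrt (real N))"
    by (intro mult_left_mono) auto
  also have "\<dots> = 2 * real N powr (3/2)"
  proof -
    have "real N powr (3/2) = real N powr (1 + 1/2)" by simp
    also have "\<dots> = real N powr 1 * real N powr (1/2)" by (rule powr_add)
    finally show ?thesis by (cases "N = 0") (simp_all add: powr_half_sqrt)
  qed
  finally show ?thesis .
qed

theorem lemma2p2:
  fixes N Q :: nat and \<Theta> :: "(real^'n) \<times> (real^'n) \<Rightarrow> real"
  assumes "N > 0" and "Q > 0" and "CARD('n) = 2 * N - 1"
    and "continuous_on ((cbox (- 1) 1 \<times> cbox 0 (1::real^'n))) \<Theta>"
    and "\<And>z. z \<in> (cbox (- 1) 1 \<times> cbox 0 (1::real^'n)) \<Longrightarrow> \<Theta> z \<ge> 0"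
  shows "integral (hcube (-1) 1) (\<lambda>x. \<Theta> (AQv Q x, BQv Q x) * FN N x)
    \<le> exp (2 * real N powr (3/2) / real Q) *
       integral (hcube 0 1) (\<lambda>y. integral (hcube (-1) 1) (\<lambda>x. \<Theta> (AQv Q x, y) * FN N x))"
proof -
  note Q = \<open>Q > 0\<close>
  let ?K = "cell_indices Q :: ('n \<Rightarrow> int) set"
  define I where "I k = integral (cbox 0 1) (\<lambda>y. \<Theta> (cell_lo Q k, y))" for k :: "'n \<Rightarrow> int"
  define G where "G k = integral (cbox (cell_lo Q k) (cell_hi Q k)) (FN N)" for k :: "'n \<Rightarrow> int"
  have \<Theta>_slice: "continuous_on (cbox 0 1) (\<lambda>y. \<Theta> (cell_lo Q k, y))"
      "\<And>y. y \<in> cbox 0 1 \<Longrightarrow> \<Theta> (cell_lo Q k, y) \<ge> 0" if k: "k \<in> ?K" for k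
    using assms(5) cell_lo_in_cube[OF Q k]
    by (auto intro!: continuous_on_compose2[OF assms(4)] continuous_intros)
  have cell_bound: "integral (cbox (cell_lo Q k) (cell_hi Q k))
      (\<lambda>x. \<Theta> (cell_lo Q k, real Q *\<^sub>R (x - cell_lo Q k)) * FN N x)
      \<le> exp (2 * real N powr (3/2) / real Q) * (I k * G k)" if k: "k \<in> ?K" for k
  proof -
    have IG_nonneg: "I k * G k \<ge> 0" unfolding I_def G_def using \<Theta>_slice[OF k] FN_pos[THEN less_imp_le]
      by (intro mult_nonneg_nonneg integral_nonneg integrable_continuous continuous_on_FN) auto
    have exp_le: "exp (real N * sqrt (real CARD('n)) / real Q) \<le> exp (2 * real N powr (3/2) / real Q)"
      using N_mult_sqrt_le_powr[of "CARD('n)" N] assms(3) Q by (simp add: divide_right_mono)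
    have "integral (cbox (cell_lo Q k) (cell_hi Q k))
        (\<lambda>x. \<Theta> (cell_lo Q k, real Q *\<^sub>R (x - cell_lo Q k)) * FN N x)
        \<le> exp (real N * sqrt (real CARD('n)) / real Q) * (I k * G k)"
      unfolding I_def G_def
      by (rule integral_rescaled_cell_mult_le[OF Q _ \<Theta>_slice[OF k] continuous_on_FN FN_pos FN_le_exp_dist])
        auto
    then show ?thesis using mult_right_mono[OF exp_le IG_nonneg] by linarith
  qed
  have "integral (hcube (-1) 1) (\<lambda>x. \<Theta> (AQv Q x, BQv Q x) * FN N x)
      = (\<Sum>k\<in>?K. integral (cbox (cell_lo Q k) (cell_hi Q k))
          (\<lambda>x. \<Theta> (cell_lo Q k, real Q *\<^sub>R (x - cell_lo Q k)) * FN N x))"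
    by (rule integral_hcube_AQv_BQv_eq_sum_cells[OF Q assms(4) continuous_on_FN])
  also have "\<dots> \<le> exp (2 * real N powr (3/2) / real Q) * (\<Sum>k\<in>?K. I k * G k)"
    unfolding sum_distrib_left by (rule sum_mono[OF cell_bound])
  also have "(\<Sum>k\<in>?K. I k * G k)
      = integral (hcube 0 1) (\<lambda>y. integral (hcube (-1) 1) (\<lambda>x. \<Theta> (AQv Q x, y) * FN N x))"
    unfolding integral_hcube_AQv_eq_sum_cells[OF Q continuous_on_FN] G_def[symmetric]
  proof (rule integral_unique[symmetric], rule has_integral_sum[OF finite_cell_indices])
    fix k assume k: "k \<in> ?K"
    show "((\<lambda>y. \<Theta> (cell_lo Q k, y) * G k) has_integral I k * G k) (hcube 0 1)"
      unfolding I_def has_integral_hcube_unit_iff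
      by (intro has_integral_mult_left integrable_integral integrable_continuous \<Theta>_slice(1)[OF k])
  qed
  finally show ?thesis .
qed

end
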